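(* Let $H\in(0,1)$, $K\in(0,1]$, $T>0$, and let $B^{H,K}$ be a bifractional Brownian motion. Then $B^{H,K}$ satisfies (C1) with $\gamma=HK$, and (C2) with $\gamma=HK$ and $\kappa=2^{(1-K)/2}$; more precisely, for every $\varphi\in\Psi$ and small $\delta>0$, $$\sup_{\varphi(\delta)\le s\le T-\delta}\sup_{0<h\le\delta}\Big|\frac{\sigma^2_{B^{H,K}}(s,s+h)}{2^{1-K}h^{2HK}}-1\Big|\le\frac{8}{L(\delta)^{2-2HK}},\qquad L(\delta)=\varphi(\delta)/\delta.$$ Consequently $B^{H,K}$ has Orey index $HK$.
   Context: A bifractional Brownian motion with parameters $H\in(0,1)$, $K\in(0,1]$ is a centered Gaussian process $(B^{H,K}_t)_{t\ge0}$ with covariance $R_{HK}(t,s)=2^{-K}\big((t^{2H}+s^{2H})^K-|t-s|^{2HK}\big)$. $\sigma_X^2(s,t)=\mathbb{E}[X(t)-X(s)]^2$. $\Psi$: continuous $\varphi\colon(0,T]\to[0,\infty)$ with $\varphi(h)\to0$, $L(h):=\varphi(h)/h\to\infty$, $hL(h)^3\to0$ as $h\downarrow0$. (C1): $\sigma_X(0,\delta)=O(\delta^\gamma)$. (C2): there is $\kappa>0$ such that for every $\varphi\in\Psi$, $\sup_{\varphi(\delta)\le t\le T-\delta}\sup_{0<h\le\delta}|\sigma_X(t,t+h)/(\kappa h^\gamma)-1|\to0$ as $\delta\downarrow0$. Orey index: for every $\varphi\in\Psi$, $\inf\{\beta>0\colon\lim_{h\downarrow0}\sup_{\varphi(h)\le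 s\le T-h}h^\beta/\sigma_X(s,s+h)=0\}$, $\inf\{\beta>0\colon\lim_{h\downarrow0}h^\beta/\sigma_X(0,h)=0\}$, $\sup\{\beta>0\colon\lim_{h\downarrow0}\inf_{\varphi(h)\le s\le T-h}h^\beta/\sigma_X(s,s+h)=\infty\}$, $\sup\{\beta>0\colon\lim_{h\downarrow0}h^\beta/\sigma_X(0,h)=\infty\}$ all coincide. *)

theory Defs
  imports "HOL-Analysis.Analysis" "HOL-Library.Landau_Symbols"
begin

definition bfbm_cov :: "real \<Rightarrow> real \<Rightarrow> real \<Rightarrow> real \<Rightarrow> real" where
  "bfbm_cov H K t s =
     2 powr (- K) * ((t powr (2*H) + s powr (2*H)) powr K - \<bar>t - s\<bar> powr (2*H*K))"

text \<open>Incremental variance E[X(t)-X(s)]^2 of a centered process with covariance R.\<close>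
definition incr_var :: "(real \<Rightarrow> real \<Rightarrow> real) \<Rightarrow> real \<Rightarrow> real \<Rightarrow> real" where
  "incr_var R s t = R t t + R s s - 2 * R s t"

definition bfbm_sigma2 :: "real \<Rightarrow> real \<Rightarrow> real \<Rightarrow> real \<Rightarrow> real" where
  "bfbm_sigma2 H K s t = incr_var (bfbm_cov H K) s t"

definition bfbm_sigma :: "real \<Rightarrow> real \<Rightarrow> real \<Rightarrow> real \<Rightarrow> real" where
  "bfbm_sigma H K s t = sqrt (bfbm_sigma2 H K s t)"

definition Psi :: "real \<Rightarrow> (real \<Rightarrow> real) set" where
  "Psi T = {\<phi>. continuous_on {0<..T} \<phi> \<and> (\<forall>h\<in>{0<..T}. 0 \<le> \<phi> h) \<and>
      (\<phi> \<longlongrightarrow> 0) (at_right 0) \<and>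
      filterlim (\<lambda>h. \<phi> h / h) at_top (at_right 0) \<and>
      ((\<lambda>h. h * (\<phi> h / h) ^ 3) \<longlongrightarrow> 0) (at_right 0)}"

definition cond_C1 :: "(real \<Rightarrow> real \<Rightarrow> real) \<Rightarrow> real \<Rightarrow> bool" where
  "cond_C1 \<sigma> \<gamma> \<longleftrightarrow> (\<lambda>\<delta>. \<sigma> 0 \<delta>) \<in> O[at_right 0](\<lambda>\<delta>. \<delta> powr \<gamma>)"

text \<open>Condition (C2); the convergence of the double supremum to 0 is written
  out in epsilon form.\<close>
definition cond_C2 :: "real \<Rightarrow> (real \<Rightarrow> real \<Rightarrow> real) \<Rightarrow> real \<Rightarrow> real \<Rightarrow> bool" where
  "cond_C2 T \<sigma> \<gamma> \<kappa> \<longleftrightarrow> (\<forall>\<phi>\<in>Psi T. \<forall>\<epsilon>>0. eventually (\<lambda>\<delta>.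
      \<forall>t\<in>{\<phi> \<delta>..T - \<delta>}. \<forall>h\<in>{0<..\<delta>}. \<bar>\<sigma> t (t + h) / (\<kappa> * h powr \<gamma>) - 1\<bar> \<le> \<epsilon>)
     (at_right 0))"

definition orey_upper_int :: "real \<Rightarrow> (real \<Rightarrow> real \<Rightarrow> real) \<Rightarrow> (real \<Rightarrow> real) \<Rightarrow> real" where
  "orey_upper_int T \<sigma> \<phi> = Inf {\<beta>. \<beta> > 0 \<and> (\<forall>\<epsilon>>0. eventually (\<lambda>h.
      \<forall>s\<in>{\<phi> h..T - h}. \<bar>h powr \<beta> / \<sigma> s (s + h)\<bar> \<le> \<epsilon>) (at_right 0))}"

definition orey_upper_0 :: "(real \<Rightarrow> real \<Rightarrow> real) \<Rightarrow> real" where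
  "orey_upper_0 \<sigma> = Inf {\<beta>. \<beta> > 0 \<and> ((\<lambda>h. h powr \<beta> / \<sigma> 0 h) \<longlongrightarrow> 0) (at_right 0)}"

definition orey_lower_int :: "real \<Rightarrow> (real \<Rightarrow> real \<Rightarrow> real) \<Rightarrow> (real \<Rightarrow> real) \<Rightarrow> real" where
  "orey_lower_int T \<sigma> \<phi> = Sup {\<beta>. \<beta> > 0 \<and> (\<forall>M. eventually (\<lambda>h.
      \<forall>s\<in>{\<phi> h..T - h}. h powr \<beta> / \<sigma> s (s + h) \<ge> M) (at_right 0))}"

definition orey_lower_0 :: "(real \<Rightarrow> real \<Rightarrow> real) \<Rightarrow> real" where
  "orey_lower_0 \<sigma> = Sup {\<beta>. \<beta> > 0 \<and> filterlim (\<lambda>h. h powr \<beta> / \<sigma> 0 h) at_top (at_right 0)}"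

definition has_orey_index :: "real \<Rightarrow> (real \<Rightarrow> real \<Rightarrow> real) \<Rightarrow> real \<Rightarrow> bool" where
  "has_orey_index T \<sigma> \<gamma> \<longleftrightarrow> (\<forall>\<phi>\<in>Psi T.
      orey_upper_int T \<sigma> \<phi> = \<gamma> \<and> orey_upper_0 \<sigma> = \<gamma> \<and>
      orey_lower_int T \<sigma> \<phi> = \<gamma> \<and> orey_lower_0 \<sigma> = \<gamma>)"

end

theory Submission
  imports Defs "HOL-Real_Asymp.Real_Asymp"
begin

text \<open>
  Put a = s^(2H) and b = (s + h)^(2H). Expanding the covariance gives
  \<sigma>^2(s, s + h) = 2^(1-K) h^(2HK) + (a^K + b^K - 2((a + b)/2)^K), and the bracket is a midpoint
  second difference of the concave power x^K: by Taylor's theorem it is at most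
  a^(K-2) (b - a)^2 / 4, while b - a \<le> 4 h s^(2H-1) for h \<le> s. So the relative error of
  \<sigma>^2 against its leading term is at most 4 (h/s)^(2-2HK) \<le> 4 / L(\<delta>)^(2-2HK) whenever
  s \<ge> \<phi>(\<delta>) and h \<le> \<delta>, which tends to 0 and gives (C2); at the origin \<sigma>(0, h) = h^(HK)
  exactly. For any \<sigma> that is comparable to h^\<gamma> uniformly in s, the quotient h^\<beta> / \<sigma>
  behaves like h^(\<beta>-\<gamma>), so all four Orey exponents equal \<gamma>.
\<close>

lemma midpoint_second_difference_le:
  fixes f f' f'' :: "real \<Rightarrow> real"
  assumes "a \<le> b"
    and f': "\<And>x. a \<le> x \<Longrightarrow> x \<le> b \<Longrightarrow> (f has_real_derivative f' x) (at x)"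
    and f'': "\<And>x. a \<le> x \<Longrightarrow> x \<le> b \<Longrightarrow> (f' has_real_derivative f'' x) (at x)"
    and bound: "\<And>x. a \<le> x \<Longrightarrow> x \<le> b \<Longrightarrow> \<bar>f'' x\<bar> \<le> M"
  shows "\<bar>f a + f b - 2 * f ((a + b) / 2)\<bar> \<le> M * (b - a)^2 / 4"
proof (cases "a = b")
  case True
  then show ?thesis by simp
next
  case False
  define m where "m = (a + b) / 2"
  define D where "D n = (if n = 0 then f else if n = 1 then f' else f'')" for n :: nat
  have am: "a < m" "m < b"
    using \<open>a \<le> b\<close> False by (auto simp: m_def)
  have D: "\<forall>n t. n < 2 \<and> a \<le> t \<and> t \<le> b \<longrightarrow> (D n has_real_derivative D (Suc n) t) (at t)"
    using f' f'' by (auto simp: D_def less_2_cases_iff)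
  have sum2: "(\<Sum>n<2. g n) = g 0 + g 1" for g :: "nat \<Rightarrow> real"
    by (simp add: numeral_2_eq_2)
  obtain t1 where t1: "a < t1" "t1 < m"
    and f_a: "f a = f m + f' m * (a - m) + f'' t1 / 2 * (a - m)^2"
    using Taylor[of 2 D f a b m a, OF _ _ D] am by (force simp: D_def sum2)
  obtain t2 where t2: "m < t2" "t2 < b"
    and f_b: "f b = f m + f' m * (b - m) + f'' t2 / 2 * (b - m)^2"
    using Taylor[of 2 D f a b m b, OF _ _ D] am by (force simp: D_def sum2)
  have "f a + f b - 2 * f m = (f'' t1 + f'' t2) / 2 * ((b - a) / 2)^2"
    unfolding f_a f_b m_def by (simp add: field_simps power2_eq_square)
  also have "\<bar>\<dots>\<bar> \<le> (M + M) / 2 * ((b - a) / 2)^2"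
    using bound[of t1] bound[of t2] t1 t2 am
    by (auto simp: abs_mult intro!: mult_right_mono divide_right_mono abs_triangle_ineq[THEN order_trans])
  finally show ?thesis
    by (simp add: m_def power_divide)
qed

lemma powr_midpoint_second_difference_le:
  fixes a b K :: real
  assumes "0 < a" "a \<le> b" "0 \<le> K" "K \<le> 1"
  shows "\<bar>a powr K + b powr K - 2 * ((a + b) / 2) powr K\<bar> \<le> a powr (K - 2) * (b - a)^2 / 4"
proof (rule midpoint_second_difference_le[OF \<open>a \<le> b\<close>])
  fix x assume x: "a \<le> x" "x \<le> b"
  then have "0 < x" using assms by linarith
  then show "((\<lambda>x. x powr K) has_real_derivative K * x powr (K - 1)) (at x)"
    and "((\<lambda>x. K * x powr (K - 1)) has_real_derivative K * ((K - 1) * x powr (K - 2))) (at x)"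
    by (auto intro!: derivative_eq_intros simp: diff_diff_eq)
  have "\<bar>K * ((K - 1) * x powr (K - 2))\<bar> = K * (1 - K) * x powr (K - 2)"
    using assms by (simp add: abs_mult)
  also have "\<dots> \<le> 1 * x powr (K - 2)"
    using assms mult_le_one[of K "1 - K"] by (intro mult_right_mono) auto
  also have "\<dots> \<le> a powr (K - 2)"
    using powr_mono2'[of "K - 2" a x] assms x by simp
  finally show "\<bar>K * ((K - 1) * x powr (K - 2))\<bar> \<le> a powr (K - 2)" .
qed

lemma powr_increment_le:
  fixes s h p :: real
  assumes "0 < h" "h \<le> s" "0 < p" "p \<le> 2"
  shows "(s + h) powr p - s powr p \<le> 2 * p * h * s powr (p - 1)"
proof -
  have "0 < s" using assms by linarith
  have "\<And>x. s \<le> x \<Longrightarrow> x \<le> s + h \<Longrightarrow> ((\<lambda>x. x powr p) has_real_derivative p * x powr (p - 1)) (at x)"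
    using \<open>0 < s\<close> by (intro has_real_derivative_powr) auto
  then obtain z where z: "s < z" "z < s + h"
    and mvt: "(s + h) powr p - s powr p = h * (p * z powr (p - 1))"
    using MVT2[of s "s + h" "\<lambda>x. x powr p" "\<lambda>x. p * x powr (p - 1)"] assms by auto
  have "z powr (p - 1) \<le> 2 * s powr (p - 1)"
  proof (cases "1 \<le> p")
    case True
    have "z powr (p - 1) \<le> (2 * s) powr (p - 1)"
      using True z assms by (intro powr_mono2) auto
    also have "\<dots> = 2 powr (p - 1) * s powr (p - 1)"
      using \<open>0 < s\<close> by (simp add: powr_mult)
    also have "\<dots> \<le> 2 powr 1 * s powr (p - 1)"
      using assms by (intro mult_right_mono powr_mono) auto
    finally show ?thesis by simp
  next
    case False
    then have "z powr (p - 1) \<le> s powr (p - 1)"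
      using powr_mono2'[of "p - 1" s z] z \<open>0 < s\<close> by simp
    then show ?thesis
      using powr_ge_zero[of s "p - 1"] by linarith
  qed
  then show ?thesis
    unfolding mvt using assms by (simp add: mult_left_mono mult.assoc)
qed

lemma abs_sqrt_minus_1_le:
  fixes r :: real
  assumes "0 \<le> r"
  shows "\<bar>sqrt r - 1\<bar> \<le> \<bar>r - 1\<bar>"
proof -
  have "r - 1 = (sqrt r - 1) * (sqrt r + 1)"
    using assms by (simp add: algebra_simps)
  then have "\<bar>r - 1\<bar> = \<bar>sqrt r - 1\<bar> * (sqrt r + 1)"
    using assms by (simp add: abs_mult)
  moreover have "\<bar>sqrt r - 1\<bar> * 1 \<le> \<bar>sqrt r - 1\<bar> * (sqrt r + 1)"
    using assms by (intro mult_left_mono) auto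
  ultimately show ?thesis by simp
qed

lemma abs_divide_minus_1_le_half_bounds:
  fixes x d :: real
  assumes "0 < d" "\<bar>x / d - 1\<bar> \<le> 1/2"
  shows "d / 2 \<le> x" "x \<le> 3 * d / 2"
proof -
  from assms(2) have "1/2 \<le> x / d" by linarith
  from assms(2) have "x / d \<le> 3/2" by linarith
  with \<open>1/2 \<le> x / d\<close> \<open>0 < d\<close> show "d / 2 \<le> x" "x \<le> 3 * d / 2"
    by (simp_all add: le_divide_eq divide_le_eq)
qed

lemma tendsto_0_iff_eventually_abs_le:
  fixes f :: "'a \<Rightarrow> real"
  shows "(f \<longlongrightarrow> 0) F \<longleftrightarrow> (\<forall>\<epsilon>>0. eventually (\<lambda>x. \<bar>f x\<bar> \<le> \<epsilon>) F)"
proof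
  assume "(f \<longlongrightarrow> 0) F"
  show "\<forall>\<epsilon>>0. eventually (\<lambda>x. \<bar>f x\<bar> \<le> \<epsilon>) F"
  proof (intro allI impI)
    fix \<epsilon> :: real assume "0 < \<epsilon>"
    with \<open>(f \<longlongrightarrow> 0) F\<close> have "eventually (\<lambda>x. \<bar>f x\<bar> < \<epsilon>) F"
      by (simp add: tendsto_iff dist_real_def)
    then show "eventually (\<lambda>x. \<bar>f x\<bar> \<le> \<epsilon>) F"
      by (rule eventually_mono) simp
  qed
next
  assume le: "\<forall>\<epsilon>>0. eventually (\<lambda>x. \<bar>f x\<bar> \<le> \<epsilon>) F"
  show "(f \<longlongrightarrow> 0) F"
    unfolding tendsto_iff dist_real_def
  proof (intro allI impI)
    fix e :: real assume "0 < e"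
    have "eventually (\<lambda>x. \<bar>f x\<bar> \<le> e / 2) F"
      using le half_gt_zero[OF \<open>0 < e\<close>] by blast
    then show "eventually (\<lambda>x. \<bar>f x - 0\<bar> < e) F"
      by (rule eventually_mono) (use \<open>0 < e\<close> in simp)
  qed
qed

lemma cInf_eq_between:
  fixes a :: real
  assumes "{a<..} \<subseteq> X" "X \<subseteq> {a..}"
  shows "Inf X = a"
proof (rule antisym)
  have "bdd_below X"
    using assms(2) by (intro bdd_belowI[of _ a]) auto
  then show "Inf X \<le> a"
    using cInf_superset_mono[OF _ _ assms(1)] by simp
  show "a \<le> Inf X"
    using cInf_superset_mono[OF _ _ assms(2)] assms(1) by force
qed

lemma cSup_eq_between:
  fixes a b :: real
  assumes "b < a" "{b<..<a} \<subseteq> X" "X \<subseteq> {..a}"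
  shows "Sup X = a"
proof (rule antisym)
  show "Sup X \<le> a"
    using cSup_subset_mono[OF _ _ assms(3)] assms(1,2) by force
  have "bdd_above X"
    using assms(3) by (intro bdd_aboveI[of _ a]) auto
  then show "a \<le> Sup X"
    using cSup_subset_mono[OF _ _ assms(2)] assms(1) by simp
qed

lemma powr_divide_bounds:
  fixes h x c C \<beta> \<gamma> :: real
  assumes "0 < h" "0 < c" "c * h powr \<gamma> \<le> x" "x \<le> C * h powr \<gamma>"
  shows "h powr (\<beta> - \<gamma>) / C \<le> h powr \<beta> / x" "h powr \<beta> / x \<le> h powr (\<beta> - \<gamma>) / c"
proof -
  have "0 < x" using assms by (smt (verit) mult_pos_pos powr_gt_zero)
  have "h powr (\<beta> - \<gamma>) / C = h powr \<beta> / (C * h powr \<gamma>)"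
    by (simp add: powr_diff)
  also have "\<dots> \<le> h powr \<beta> / x"
    using assms \<open>0 < x\<close> by (intro divide_left_mono) auto
  finally show "h powr (\<beta> - \<gamma>) / C \<le> h powr \<beta> / x" .
  have "h powr \<beta> / x \<le> h powr \<beta> / (c * h powr \<gamma>)"
    using assms \<open>0 < x\<close> by (intro divide_left_mono) auto
  also have "\<dots> = h powr (\<beta> - \<gamma>) / c"
    by (simp add: powr_diff)
  finally show "h powr \<beta> / x \<le> h powr (\<beta> - \<gamma>) / c" .
qed

definition comparable_at_right_0 ::
    "(real \<Rightarrow> real set) \<Rightarrow> (real \<Rightarrow> real \<Rightarrow> real) \<Rightarrow> real \<Rightarrow> real \<Rightarrow> real \<Rightarrow> bool" where
  "comparable_at_right_0 S \<sigma> \<gamma> c C \<longleftrightarrow> eventually (\<lambda>h. S h \<noteq> {} \<and>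
     (\<forall>s\<in>S h. c * h powr \<gamma> \<le> \<sigma> s (s + h) \<and> \<sigma> s (s + h) \<le> C * h powr \<gamma>)) (at_right 0)"

lemma comparable_at_right_0_upper_pos:
  assumes "comparable_at_right_0 S \<sigma> \<gamma> c C" "0 < c"
  shows "0 < C"
proof -
  have "eventually (\<lambda>h. 0 < h \<and> S h \<noteq> {} \<and> (\<forall>s\<in>S h. c * h powr \<gamma> \<le> \<sigma> s (s + h)
      \<and> \<sigma> s (s + h) \<le> C * h powr \<gamma>)) (at_right 0)"
    using assms(1) eventually_at_right_less
    unfolding comparable_at_right_0_def by eventually_elim blast
  from eventually_happens'[OF trivial_limit_at_right_real this]
  obtain h where h: "0 < h" "S h \<noteq> {}"
    and bounds: "\<forall>s\<in>S h. c * h powr \<gamma> \<le> \<sigma> s (s + h) \<and> \<sigma> s (s + h) \<le> C * h powr \<gamma>"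
    by blast
  then obtain s where "s \<in> S h" by blast
  with bounds have "c * h powr \<gamma> \<le> C * h powr \<gamma>" by force
  then have "c \<le> C" using \<open>0 < h\<close> by (simp add: mult_le_cancel_right)
  with \<open>0 < c\<close> show ?thesis by linarith
qed

lemma comparable_at_right_0_quotient_bounds:
  assumes "comparable_at_right_0 S \<sigma> \<gamma> c C" "0 < c"
  shows "eventually (\<lambda>h. S h \<noteq> {} \<and> (\<forall>s\<in>S h. 0 < h powr \<beta> / \<sigma> s (s + h)
      \<and> h powr (\<beta> - \<gamma>) / C \<le> h powr \<beta> / \<sigma> s (s + h)
      \<and> h powr \<beta> / \<sigma> s (s + h) \<le> h powr (\<beta> - \<gamma>) / c)) (at_right 0)"
  using assms(1) eventually_at_right_less unfolding comparable_at_right_0_def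
proof eventually_elim
  case (elim h)
  show ?case
  proof (intro conjI ballI)
    show "S h \<noteq> {}" using elim by blast
  next
    fix s assume "s \<in> S h"
    with elim have lower: "c * h powr \<gamma> \<le> \<sigma> s (s + h)"
      and upper: "\<sigma> s (s + h) \<le> C * h powr \<gamma>"
      by blast+
    have "0 < c * h powr \<gamma>" using \<open>0 < c\<close> \<open>0 < h\<close> by simp
    with lower show "0 < h powr \<beta> / \<sigma> s (s + h)" using \<open>0 < h\<close> by simp
    show "h powr (\<beta> - \<gamma>) / C \<le> h powr \<beta> / \<sigma> s (s + h)"
      by (rule powr_divide_bounds(1)[OF \<open>0 < h\<close> \<open>0 < c\<close> lower upper])
    show "h powr \<beta> / \<sigma> s (s + h) \<le> h powr (\<beta> - \<gamma>) / c"
      by (rule powr_divide_bounds(2)[OF \<open>0 < h\<close> \<open>0 < c\<close> lower upper])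
  qed
qed

lemma comparable_quotient_uniformly_small:
  assumes comparable: "comparable_at_right_0 S \<sigma> \<gamma> c C" and "0 < c" "\<gamma> < \<beta>" "0 < \<epsilon>"
  shows "eventually (\<lambda>h. \<forall>s\<in>S h. \<bar>h powr \<beta> / \<sigma> s (s + h)\<bar> \<le> \<epsilon>) (at_right 0)"
proof -
  have "0 < \<beta> - \<gamma>" using \<open>\<gamma> < \<beta>\<close> by simp
  then have "((\<lambda>h. h powr (\<beta> - \<gamma>)) \<longlongrightarrow> 0) (at_right 0)"
    by real_asymp
  then have "eventually (\<lambda>h. h powr (\<beta> - \<gamma>) / c < \<epsilon>) (at_right 0)"
    using \<open>0 < \<epsilon>\<close> by (intro order_tendstoD(2)) (auto intro: tendsto_divide_zero)
  with comparable_at_right_0_quotient_bounds[OF comparable \<open>0 < c\<close>, of \<beta>]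
  show ?thesis
  proof eventually_elim
    case (elim h)
    show ?case
    proof
      fix s assume "s \<in> S h"
      with elim have "0 < h powr \<beta> / \<sigma> s (s + h)"
        and "h powr \<beta> / \<sigma> s (s + h) \<le> h powr (\<beta> - \<gamma>) / c"
        by blast+
      with elim(2) show "\<bar>h powr \<beta> / \<sigma> s (s + h)\<bar> \<le> \<epsilon>" by linarith
    qed
  qed
qed

lemma comparable_quotient_bounded_imp_ge:
  assumes comparable: "comparable_at_right_0 S \<sigma> \<gamma> c C" and "0 < c"
    and bounded: "eventually (\<lambda>h. \<forall>s\<in>S h. \<bar>h powr \<beta> / \<sigma> s (s + h)\<bar> \<le> 1) (at_right 0)"
  shows "\<gamma> \<le> \<beta>"
proof (rule ccontr)
  assume "\<not> \<gamma> \<le> \<beta>"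
  then have "\<beta> - \<gamma> < 0" by simp
  then have "filterlim (\<lambda>h. h powr (\<beta> - \<gamma>)) at_top (at_right 0)"
    by real_asymp
  then have "eventually (\<lambda>h. C < h powr (\<beta> - \<gamma>)) (at_right 0)"
    by (simp add: filterlim_at_top_dense)
  with bounded comparable_at_right_0_quotient_bounds[OF comparable \<open>0 < c\<close>, of \<beta>]
  have "eventually (\<lambda>h. False) (at_right (0::real))"
  proof eventually_elim
    case (elim h)
    then obtain s where "s \<in> S h" by blast
    with elim have "h powr (\<beta> - \<gamma>) / C \<le> h powr \<beta> / \<sigma> s (s + h)"
      and "\<bar>h powr \<beta> / \<sigma> s (s + h)\<bar> \<le> 1"
      by blast+
    moreover have "1 < h powr (\<beta> - \<gamma>) / C"
      using \<open>C < h powr (\<beta> - \<gamma>)\<close> comparable_at_right_0_upper_pos[OF comparable \<open>0 < c\<close>]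
      by simp
    ultimately show False by linarith
  qed
  then show False by (simp add: trivial_limit_at_right_real)
qed

lemma comparable_quotient_uniformly_large:
  assumes comparable: "comparable_at_right_0 S \<sigma> \<gamma> c C" and "0 < c" "\<beta> < \<gamma>"
  shows "eventually (\<lambda>h. \<forall>s\<in>S h. M \<le> h powr \<beta> / \<sigma> s (s + h)) (at_right 0)"
proof -
  have "0 < C" using comparable_at_right_0_upper_pos[OF comparable \<open>0 < c\<close>] .
  have "\<beta> - \<gamma> < 0" using \<open>\<beta> < \<gamma>\<close> by simp
  then have "filterlim (\<lambda>h. h powr (\<beta> - \<gamma>)) at_top (at_right 0)"
    by real_asymp
  then have "eventually (\<lambda>h. M * C \<le> h powr (\<beta> - \<gamma>)) (at_right 0)"
    by (simp add: filterlim_at_top)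
  with comparable_at_right_0_quotient_bounds[OF comparable \<open>0 < c\<close>, of \<beta>]
  show ?thesis
  proof eventually_elim
    case (elim h)
    have "M \<le> h powr (\<beta> - \<gamma>) / C"
      using \<open>M * C \<le> h powr (\<beta> - \<gamma>)\<close> \<open>0 < C\<close> by (simp add: pos_le_divide_eq)
    show ?case
    proof
      fix s assume "s \<in> S h"
      with elim have "h powr (\<beta> - \<gamma>) / C \<le> h powr \<beta> / \<sigma> s (s + h)" by blast
      with \<open>M \<le> _\<close> show "M \<le> h powr \<beta> / \<sigma> s (s + h)" by linarith
    qed
  qed
qed

lemma comparable_quotient_large_imp_le:
  assumes comparable: "comparable_at_right_0 S \<sigma> \<gamma> c C" and "0 < c"
    and large: "eventually (\<lambda>h. \<forall>s\<in>S h. 1 \<le> h powr \<beta> / \<sigma> s (s + h)) (at_right 0)"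
  shows "\<beta> \<le> \<gamma>"
proof (rule ccontr)
  assume "\<not> \<beta> \<le> \<gamma>"
  then have "0 < \<beta> - \<gamma>" by simp
  then have "((\<lambda>h. h powr (\<beta> - \<gamma>)) \<longlongrightarrow> 0) (at_right 0)"
    by real_asymp
  then have "eventually (\<lambda>h. h powr (\<beta> - \<gamma>) < c) (at_right 0)"
    using \<open>0 < c\<close> by (intro order_tendstoD(2))
  with large comparable_at_right_0_quotient_bounds[OF comparable \<open>0 < c\<close>, of \<beta>]
  have "eventually (\<lambda>h. False) (at_right (0::real))"
  proof eventually_elim
    case (elim h)
    then obtain s where "s \<in> S h" by blast
    with elim have "h powr \<beta> / \<sigma> s (s + h) \<le> h powr (\<beta> - \<gamma>) / c"
      and "1 \<le> h powr \<beta> / \<sigma> s (s + h)"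
      by blast+
    moreover have "h powr (\<beta> - \<gamma>) / c < 1"
      using \<open>h powr (\<beta> - \<gamma>) < c\<close> \<open>0 < c\<close> by simp
    ultimately show False by linarith
  qed
  then show False by (simp add: trivial_limit_at_right_real)
qed

lemma orey_upper_exponent_eq:
  assumes "0 \<le> \<gamma>" "0 < c" and comparable: "comparable_at_right_0 S \<sigma> \<gamma> c C"
  shows "Inf {\<beta>. \<beta> > 0 \<and> (\<forall>\<epsilon>>0. eventually (\<lambda>h.
      \<forall>s\<in>S h. \<bar>h powr \<beta> / \<sigma> s (s + h)\<bar> \<le> \<epsilon>) (at_right 0))} = \<gamma>"
proof (rule cInf_eq_between)
  show "{\<gamma><..} \<subseteq> {\<beta>. \<beta> > 0 \<and> (\<forall>\<epsilon>>0. eventually (\<lambda>h.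
      \<forall>s\<in>S h. \<bar>h powr \<beta> / \<sigma> s (s + h)\<bar> \<le> \<epsilon>) (at_right 0))}"
    using comparable_quotient_uniformly_small[OF comparable \<open>0 < c\<close>] \<open>0 \<le> \<gamma>\<close> by auto
  show "{\<beta>. \<beta> > 0 \<and> (\<forall>\<epsilon>>0. eventually (\<lambda>h.
      \<forall>s\<in>S h. \<bar>h powr \<beta> / \<sigma> s (s + h)\<bar> \<le> \<epsilon>) (at_right 0))} \<subseteq> {\<gamma>..}"
    using comparable_quotient_bounded_imp_ge[OF comparable \<open>0 < c\<close>] by auto
qed

lemma orey_lower_exponent_eq:
  assumes "0 < \<gamma>" "0 < c" and comparable: "comparable_at_right_0 S \<sigma> \<gamma> c C"
  shows "Sup {\<beta>. \<beta> > 0 \<and> (\<forall>M. eventually (\<lambda>h.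
      \<forall>s\<in>S h. h powr \<beta> / \<sigma> s (s + h) \<ge> M) (at_right 0))} = \<gamma>"
proof (rule cSup_eq_between[OF \<open>0 < \<gamma>\<close>])
  show "{0<..<\<gamma>} \<subseteq> {\<beta>. \<beta> > 0 \<and> (\<forall>M. eventually (\<lambda>h.
      \<forall>s\<in>S h. h powr \<beta> / \<sigma> s (s + h) \<ge> M) (at_right 0))}"
    using comparable_quotient_uniformly_large[OF comparable \<open>0 < c\<close>] by auto
  show "{\<beta>. \<beta> > 0 \<and> (\<forall>M. eventually (\<lambda>h.
      \<forall>s\<in>S h. h powr \<beta> / \<sigma> s (s + h) \<ge> M) (at_right 0))} \<subseteq> {..\<gamma>}"
    using comparable_quotient_large_imp_le[OF comparable \<open>0 < c\<close>] by auto
qed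

lemma cond_C2_imp_comparable_at_right_0:
  assumes C2: "cond_C2 T \<sigma> \<gamma> \<kappa>" and "0 < \<kappa>" "0 < T" and \<phi>: "\<phi> \<in> Psi T"
  shows "comparable_at_right_0 (\<lambda>h. {\<phi> h..T - h}) \<sigma> \<gamma> (\<kappa> / 2) (3 * \<kappa> / 2)"
proof -
  have close: "eventually (\<lambda>\<delta>. \<forall>t\<in>{\<phi> \<delta>..T - \<delta>}. \<forall>h\<in>{0<..\<delta>}.
      \<bar>\<sigma> t (t + h) / (\<kappa> * h powr \<gamma>) - 1\<bar> \<le> 1/2) (at_right 0)"
  proof -
    have "\<forall>\<epsilon>>0. eventually (\<lambda>\<delta>. \<forall>t\<in>{\<phi> \<delta>..T - \<delta>}. \<forall>h\<in>{0<..\<delta>}.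
        \<bar>\<sigma> t (t + h) / (\<kappa> * h powr \<gamma>) - 1\<bar> \<le> \<epsilon>) (at_right 0)"
      using C2 \<phi> unfolding cond_C2_def by blast
    then show ?thesis by (rule allE[of _ "1/2"]) simp
  qed
  have "(\<phi> \<longlongrightarrow> 0) (at_right 0)"
    using \<phi> by (simp add: Psi_def)
  then have "eventually (\<lambda>h. \<phi> h < T / 2) (at_right 0)"
    using \<open>0 < T\<close> by (intro order_tendstoD(2)) auto
  moreover have "eventually (\<lambda>h. 0 < h \<and> h < T / 2) (at_right (0::real))"
    using \<open>0 < T\<close> by (auto simp: eventually_at_right_field intro!: exI[of _ "T / 2"])
  ultimately show ?thesis
    using close unfolding comparable_at_right_0_def
  proof eventually_elim
    case (elim h)
    show ?case
    proof (intro conjI ballI)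
      show "{\<phi> h..T - h} \<noteq> {}" using elim by simp
    next
      fix s assume "s \<in> {\<phi> h..T - h}"
      with elim have near: "\<bar>\<sigma> s (s + h) / (\<kappa> * h powr \<gamma>) - 1\<bar> \<le> 1/2" by simp
      have "0 < \<kappa> * h powr \<gamma>" using \<open>0 < \<kappa>\<close> elim by simp
      from abs_divide_minus_1_le_half_bounds[OF this near]
      show "\<kappa> / 2 * h powr \<gamma> \<le> \<sigma> s (s + h)" "\<sigma> s (s + h) \<le> 3 * \<kappa> / 2 * h powr \<gamma>"
        by simp_all
    qed
  qed
qed

lemma cond_C2_imp_has_orey_index:
  assumes C2: "cond_C2 T \<sigma> \<gamma> \<kappa>" and "0 < \<kappa>" "0 < \<gamma>" "0 < T" "0 < c"
    and origin: "eventually (\<lambda>h. c * h powr \<gamma> \<le> \<sigma> 0 h \<and> \<sigma> 0 h \<le> C * h powr \<gamma>) (at_right 0)"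
  shows "has_orey_index T \<sigma> \<gamma>"
  unfolding has_orey_index_def
proof (intro ballI conjI)
  fix \<phi> assume "\<phi> \<in> Psi T"
  note interior = cond_C2_imp_comparable_at_right_0[OF C2 \<open>0 < \<kappa>\<close> \<open>0 < T\<close> this]
  have "0 < \<kappa> / 2" using \<open>0 < \<kappa>\<close> by simp
  show "orey_upper_int T \<sigma> \<phi> = \<gamma>"
    unfolding orey_upper_int_def
    using orey_upper_exponent_eq[OF _ \<open>0 < \<kappa> / 2\<close> interior] \<open>0 < \<gamma>\<close> by simp
  show "orey_lower_int T \<sigma> \<phi> = \<gamma>"
    unfolding orey_lower_int_def
    using orey_lower_exponent_eq[OF \<open>0 < \<gamma>\<close> \<open>0 < \<kappa> / 2\<close> interior] by simp
  \<comment> \<open>The exponents at the origin are the case of the one-point index sets \<open>{0}\<close>.\<close>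
  have at_origin: "comparable_at_right_0 (\<lambda>h. {0}) \<sigma> \<gamma> c C"
    using origin by (simp add: comparable_at_right_0_def)
  show "orey_upper_0 \<sigma> = \<gamma>"
    unfolding orey_upper_0_def tendsto_0_iff_eventually_abs_le
    using orey_upper_exponent_eq[OF _ \<open>0 < c\<close> at_origin] \<open>0 < \<gamma>\<close> by simp
  show "orey_lower_0 \<sigma> = \<gamma>"
    unfolding orey_lower_0_def filterlim_at_top
    using orey_lower_exponent_eq[OF \<open>0 < \<gamma>\<close> \<open>0 < c\<close> at_origin] by simp
qed

lemma bfbm_sigma2_eq:
  assumes "0 \<le> s" "0 < h"
  shows "bfbm_sigma2 H K s (s + h) = (s + h) powr (2*H*K) + s powr (2*H*K)
    - 2 powr (1 - K) * ((s powr (2*H) + (s + h) powr (2*H)) powr K - h powr (2*H*K))"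
proof -
  have diag: "bfbm_cov H K t t = t powr (2*H*K)" if "0 \<le> t" for t
    using that by (simp add: bfbm_cov_def powr_mult powr_powr flip: mult_2 powr_add)
  have cross: "bfbm_cov H K s (s + h)
      = 2 powr (- K) * ((s powr (2*H) + (s + h) powr (2*H)) powr K - h powr (2*H*K))"
    using assms by (simp add: bfbm_cov_def)
  have "(2::real) powr (1 - K) = 2 powr 1 * 2 powr (- K)"
    by (subst powr_add[symmetric]) simp
  then show ?thesis
    using assms unfolding bfbm_sigma2_def incr_var_def
    by (simp add: diag cross flip: mult.assoc)
qed

lemma bfbm_sigma_zero:
  assumes "0 < H" "0 < K" "0 < h"
  shows "bfbm_sigma H K 0 h = h powr (H * K)"
  using bfbm_sigma2_eq[of 0 h H K] assms
  by (simp add: bfbm_sigma_def powr_powr powr_half_sqrt[symmetric])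

lemma bfbm_sigma2_minus_leading_term:
  assumes "0 < s" "0 < h"
  shows "bfbm_sigma2 H K s (s + h) - 2 powr (1 - K) * h powr (2*H*K)
    = s powr (2*H*K) + (s + h) powr (2*H*K)
      - 2 * ((s powr (2*H) + (s + h) powr (2*H)) / 2) powr K"
proof -
  have "2 powr (1 - K) * x powr K = 2 * (x / 2) powr K" if "0 \<le> x" for x :: real
    using that by (simp add: powr_divide powr_diff)
  from this[of "s powr (2*H) + (s + h) powr (2*H)"] show ?thesis
    unfolding bfbm_sigma2_eq[OF less_imp_le[OF \<open>0 < s\<close>] \<open>0 < h\<close>]
    by (simp add: algebra_simps)
qed

lemma bfbm_sigma2_defect_le:
  assumes H: "0 < H" "H < 1" and K: "0 < K" "K \<le> 1" and h: "0 < h" "h \<le> s"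
  shows "\<bar>bfbm_sigma2 H K s (s + h) - 2 powr (1 - K) * h powr (2*H*K)\<bar>
    \<le> 4 * h^2 * s powr (2*H*K - 2)"
proof -
  have "0 < s" using h by linarith
  define a b where "a = s powr (2*H)" and "b = (s + h) powr (2*H)"
  have a: "0 < a" "a \<le> b"
    using \<open>0 < s\<close> H h by (auto simp: a_def b_def intro: powr_mono2)
  have "b - a \<le> 2 * (2*H) * h * s powr (2*H - 1)"
    using powr_increment_le[of h s "2*H"] H h by (simp add: a_def b_def)
  also have "\<dots> \<le> 4 * h * s powr (2*H - 1)"
    using H h by (intro mult_right_mono) auto
  finally have "b - a \<le> 4 * h * s powr (2*H - 1)" .
  then have "(b - a)^2 \<le> (4 * h * s powr (2*H - 1))^2"
    using a by (intro power_mono) auto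
  have "\<bar>bfbm_sigma2 H K s (s + h) - 2 powr (1 - K) * h powr (2*H*K)\<bar>
      = \<bar>a powr K + b powr K - 2 * ((a + b) / 2) powr K\<bar>"
    using \<open>0 < s\<close> h
    by (simp add: bfbm_sigma2_minus_leading_term a_def b_def powr_powr)
  also have "\<dots> \<le> a powr (K - 2) * (b - a)^2 / 4"
    using a K by (intro powr_midpoint_second_difference_le) auto
  also have "\<dots> \<le> a powr (K - 2) * (4 * h * s powr (2*H - 1))^2 / 4"
    using \<open>(b - a)^2 \<le> _\<close> by (intro divide_right_mono mult_left_mono) auto
  also have "\<dots> = 4 * h^2 * (a powr (K - 2) * s powr (2*H - 1) * s powr (2*H - 1))"
    by (simp add: power2_eq_square)
  also have "a powr (K - 2) * s powr (2*H - 1) * s powr (2*H - 1)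
      = s powr (2*H*(K - 2) + (2*H - 1) + (2*H - 1))"
    unfolding a_def powr_powr by (simp only: powr_add)
  also have "2*H*(K - 2) + (2*H - 1) + (2*H - 1) = 2*H*K - 2"
    by (simp add: algebra_simps)
  finally show ?thesis .
qed

lemma bfbm_sigma2_rel_error_le:
  assumes H: "0 < H" "H < 1" and K: "0 < K" "K \<le> 1" and h: "0 < h" "h \<le> s"
  shows "\<bar>bfbm_sigma2 H K s (s + h) / (2 powr (1 - K) * h powr (2*H*K)) - 1\<bar>
    \<le> 4 * (h / s) powr (2 - 2*H*K)"
proof -
  have "0 < s" using h by linarith
  define c where "c = 2 powr (1 - K) * h powr (2*H*K)"
  have "h powr (2*H*K) \<le> c"
    using K ge_one_powr_ge_zero[of 2 "1 - K"]
      mult_right_mono[of 1 "2 powr (1 - K)" "h powr (2*H*K)"]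
    by (simp add: c_def)
  have "0 < c" using h by (simp add: c_def)
  have "\<bar>bfbm_sigma2 H K s (s + h) / c - 1\<bar> = \<bar>(bfbm_sigma2 H K s (s + h) - c) / c\<bar>"
    using \<open>0 < c\<close> by (simp add: diff_divide_distrib)
  also have "\<dots> = \<bar>bfbm_sigma2 H K s (s + h) - c\<bar> / c"
    using \<open>0 < c\<close> by simp
  also have "\<dots> \<le> 4 * h^2 * s powr (2*H*K - 2) / h powr (2*H*K)"
    using bfbm_sigma2_defect_le[OF H K h] \<open>h powr (2*H*K) \<le> c\<close> h
    by (intro frac_le) (auto simp: c_def)
  also have "\<dots> = 4 * (h / s) powr (2 - 2*H*K)"
    using h \<open>0 < s\<close> by (simp add: powr_divide powr_diff field_simps)
  finally show ?thesis by (simp add: c_def)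
qed

lemma bfbm_sigma2_uniform_rel_error_le:
  assumes H: "0 < H" "H < 1" and K: "0 < K" "K \<le> 1" and \<phi>: "\<phi> \<in> Psi T"
  shows "eventually (\<lambda>\<delta>. \<forall>s\<in>{\<phi> \<delta>..T - \<delta>}. \<forall>h\<in>{0<..\<delta>}.
      \<bar>bfbm_sigma2 H K s (s + h) / (2 powr (1 - K) * h powr (2*H*K)) - 1\<bar>
        \<le> 4 / (\<phi> \<delta> / \<delta>) powr (2 - 2*H*K)) (at_right 0)"
proof -
  have "filterlim (\<lambda>\<delta>. \<phi> \<delta> / \<delta>) at_top (at_right 0)"
    using \<phi> by (simp add: Psi_def)
  then have "eventually (\<lambda>\<delta>. 1 \<le> \<phi> \<delta> / \<delta>) (at_right 0)"
    by (simp add: filterlim_at_top)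
  with eventually_at_right_less show ?thesis
  proof eventually_elim
    case (elim \<delta>)
    then have "\<delta> \<le> \<phi> \<delta>" by (simp add: field_simps)
    have "H * K < 1" using H K mult_left_le[of K H] by linarith
    show ?case
    proof (intro ballI)
      fix s h assume s: "s \<in> {\<phi> \<delta>..T - \<delta>}" and h: "h \<in> {0<..\<delta>}"
      then have "0 < h" "h \<le> s" using \<open>\<delta> \<le> \<phi> \<delta>\<close> by auto
      have "\<bar>bfbm_sigma2 H K s (s + h) / (2 powr (1 - K) * h powr (2*H*K)) - 1\<bar>
          \<le> 4 * (h / s) powr (2 - 2*H*K)"
        using bfbm_sigma2_rel_error_le[OF H K \<open>0 < h\<close> \<open>h \<le> s\<close>] .
      also have "\<dots> \<le> 4 * (1 / (\<phi> \<delta> / \<delta>)) powr (2 - 2*H*K)"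
        using s h elim \<open>\<delta> \<le> \<phi> \<delta>\<close> \<open>H * K < 1\<close>
        by (intro mult_left_mono powr_mono2) (auto intro: frac_le)
      also have "\<dots> = 4 / (\<phi> \<delta> / \<delta>) powr (2 - 2*H*K)"
        using elim by (simp add: powr_divide)
      finally show "\<bar>bfbm_sigma2 H K s (s + h) / (2 powr (1 - K) * h powr (2*H*K)) - 1\<bar>
          \<le> 4 / (\<phi> \<delta> / \<delta>) powr (2 - 2*H*K)" .
    qed
  qed
qed

lemma bfbm_sigma2_rel_error_uniformly_small:
  assumes H: "0 < H" "H < 1" and K: "0 < K" "K \<le> 1" and \<phi>: "\<phi> \<in> Psi T" and "0 < \<epsilon>"
  shows "eventually (\<lambda>\<delta>. \<forall>s\<in>{\<phi> \<delta>..T - \<delta>}. \<forall>h\<in>{0<..\<delta>}.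
      \<bar>bfbm_sigma2 H K s (s + h) / (2 powr (1 - K) * h powr (2*H*K)) - 1\<bar> \<le> \<epsilon>) (at_right 0)"
proof -
  have "0 < 2 - 2*H*K" using H K mult_left_le[of K H] by linarith
  then have "filterlim (\<lambda>L. L powr (2 - 2*H*K)) at_top at_top"
    by real_asymp
  moreover have "filterlim (\<lambda>\<delta>. \<phi> \<delta> / \<delta>) at_top (at_right 0)"
    using \<phi> by (simp add: Psi_def)
  ultimately have "filterlim (\<lambda>\<delta>. (\<phi> \<delta> / \<delta>) powr (2 - 2*H*K)) at_top (at_right 0)"
    by (rule filterlim_compose)
  then have "eventually (\<lambda>\<delta>. 4 / \<epsilon> \<le> (\<phi> \<delta> / \<delta>) powr (2 - 2*H*K)) (at_right 0)"
    by (simp add: filterlim_at_top)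
  with bfbm_sigma2_uniform_rel_error_le[OF H K \<phi>] show ?thesis
  proof eventually_elim
    case (elim \<delta>)
    have "4 / (\<phi> \<delta> / \<delta>) powr (2 - 2*H*K) \<le> 4 / (4 / \<epsilon>)"
      using elim(2) \<open>0 < \<epsilon>\<close> by (intro frac_le) auto
    with elim(1) \<open>0 < \<epsilon>\<close> show ?case by fastforce
  qed
qed

lemma bfbm_cond_C2:
  assumes H: "0 < H" "H < 1" and K: "0 < K" "K \<le> 1"
  shows "cond_C2 T (bfbm_sigma H K) (H * K) (2 powr ((1 - K) / 2))"
  unfolding cond_C2_def
proof (intro ballI allI impI)
  fix \<phi> and \<epsilon> :: real assume \<phi>: "\<phi> \<in> Psi T" and "0 < \<epsilon>"
  then have "0 < min \<epsilon> 1" by simp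
  from bfbm_sigma2_rel_error_uniformly_small[OF H K \<phi> this]
  show "eventually (\<lambda>\<delta>. \<forall>t\<in>{\<phi> \<delta>..T - \<delta>}. \<forall>h\<in>{0<..\<delta>}.
      \<bar>bfbm_sigma H K t (t + h) / (2 powr ((1 - K) / 2) * h powr (H * K)) - 1\<bar> \<le> \<epsilon>) (at_right 0)"
  proof (rule eventually_mono, intro ballI)
    fix \<delta> t h assume "t \<in> {\<phi> \<delta>..T - \<delta>}" "h \<in> {0<..\<delta>}" and
      "\<forall>s\<in>{\<phi> \<delta>..T - \<delta>}. \<forall>h\<in>{0<..\<delta>}.
        \<bar>bfbm_sigma2 H K s (s + h) / (2 powr (1 - K) * h powr (2*H*K)) - 1\<bar> \<le> min \<epsilon> 1"
    then obtain r where r: "r = bfbm_sigma2 H K t (t + h) / (2 powr (1 - K) * h powr (2*H*K))"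
      and "\<bar>r - 1\<bar> \<le> min \<epsilon> 1" and "0 < h"
      by auto
    have "sqrt (2 powr (1 - K) * h powr (2*H*K)) = 2 powr ((1 - K) / 2) * h powr (H * K)"
      using \<open>0 < h\<close> by (simp add: real_sqrt_mult powr_half_sqrt[symmetric] powr_powr)
    then have "bfbm_sigma H K t (t + h) / (2 powr ((1 - K) / 2) * h powr (H * K)) = sqrt r"
      by (simp add: r bfbm_sigma_def real_sqrt_divide)
    moreover have "\<bar>sqrt r - 1\<bar> \<le> \<bar>r - 1\<bar>"
      using \<open>\<bar>r - 1\<bar> \<le> min \<epsilon> 1\<close> by (intro abs_sqrt_minus_1_le) auto
    ultimately show "\<bar>bfbm_sigma H K t (t + h) / (2 powr ((1 - K) / 2) * h powr (H * K)) - 1\<bar> \<le> \<epsilon>"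
      using \<open>\<bar>r - 1\<bar> \<le> min \<epsilon> 1\<close> by linarith
  qed
qed

theorem mainTheorem13:
  fixes H K T :: real
  assumes "0 < H" "H < 1" "0 < K" "K \<le> 1" "0 < T"
  shows "cond_C1 (bfbm_sigma H K) (H * K)
    \<and> cond_C2 T (bfbm_sigma H K) (H * K) (2 powr ((1 - K) / 2))
    \<and> (\<forall>\<phi>\<in>Psi T. eventually (\<lambda>\<delta>. \<forall>s\<in>{\<phi> \<delta>..T - \<delta>}. \<forall>h\<in>{0<..\<delta>}.
          \<bar>bfbm_sigma2 H K s (s + h) / (2 powr (1 - K) * h powr (2 * H * K)) - 1\<bar>
            \<le> 8 / (\<phi> \<delta> / \<delta>) powr (2 - 2 * H * K)) (at_right 0))
    \<and> has_orey_index T (bfbm_sigma H K) (H * K)"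
proof (intro conjI ballI)
  note H = assms(1,2) and K = assms(3,4)
  have origin: "eventually (\<lambda>h. bfbm_sigma H K 0 h = h powr (H * K)) (at_right 0)"
    using eventually_at_right_less by eventually_elim (simp add: bfbm_sigma_zero assms)
  then show "cond_C1 (bfbm_sigma H K) (H * K)"
    unfolding cond_C1_def by (intro bigoI[where c = 1]) (auto elim: eventually_mono)
  show C2: "cond_C2 T (bfbm_sigma H K) (H * K) (2 powr ((1 - K) / 2))"
    using bfbm_cond_C2[OF H K] .
  show "has_orey_index T (bfbm_sigma H K) (H * K)"
    using cond_C2_imp_has_orey_index[OF C2, of 1 1] origin assms by (simp add: eventually_mono)
  fix \<phi> assume "\<phi> \<in> Psi T"
  from bfbm_sigma2_uniform_rel_error_le[OF H K this]
  show "eventually (\<lambda>\<delta>. \<forall>s\<in>{\<phi> \<delta>..T - \<delta>}. \<forall>h\<in>{0<..\<delta>}.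
      \<bar>bfbm_sigma2 H K s (s + h) / (2 powr (1 - K) * h powr (2 * H * K)) - 1\<bar>
        \<le> 8 / (\<phi> \<delta> / \<delta>) powr (2 - 2 * H * K)) (at_right 0)"
    by (rule eventually_mono) (fastforce intro: order_trans divide_right_mono)
qed

end
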